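(* Let $n \geq 2$ and suppose there exists a normalized symmetric conference matrix $C(n)$ of order $n$. Then for each $m \in \{n+1, n+2, n+3\}$, the complete graph $K_m$ has a good signing, i.e. there is an edge-signing $\sigma: E(K_m) \to \{-1,1\}$ such that every eigenvalue $\lambda$ of the signed adjacency matrix $A^{\sigma}$ satisfies $|\lambda| \leq 2\sqrt{m-2}$.
   Context: A conference matrix of order $n$ is an $n\times n$ matrix $C(n)$ with zero diagonal and off-diagonal entries in $\{1,-1\}$ such that $C(n)C(n)^T = (n-1)I$. It is normalized symmetric if it is symmetric and all entries of its first row are non-negative. For a graph $G$ and an edge-signing $\sigma: E(G)\to\{-1,1\}$, the signed adjacency matrix $A^{\sigma}=[a^\sigma_{ij}]$ has $a^{\sigma}_{ij}=\sigma(ij)$ if $ij\in E(G)$ and $0$ otherwise. For a $d$-regular graph $G$, a signing $\sigma$ is called a good signing if all eigenvalues of $A^{\sigma}$ have absolute value at most $2\sqrt{d-1}$; $K_m$ is $(m-1)$-regular. *)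

theory Defs
  imports "Jordan_Normal_Form.Char_Poly"
begin

definition conference_matrix :: "nat \<Rightarrow> real mat \<Rightarrow> bool" where
  "conference_matrix n C \<longleftrightarrow>
     C \<in> carrier_mat n n \<and>
     (\<forall>i<n. C $$ (i,i) = 0) \<and>
     (\<forall>i<n. \<forall>j<n. i \<noteq> j \<longrightarrow> C $$ (i,j) = 1 \<or> C $$ (i,j) = -1) \<and>
     C * transpose_mat C = of_nat (n - 1) \<cdot>\<^sub>m 1\<^sub>m n"

definition normalized_symmetric_conference_matrix :: "nat \<Rightarrow> real mat \<Rightarrow> bool" where
  "normalized_symmetric_conference_matrix n C \<longleftrightarrow>
     conference_matrix n C \<and> transpose_mat C = C \<and> (\<forall>j<n. C $$ (0,j) \<ge> 0)"

definition complete_graph_edges :: "nat \<Rightarrow> nat set set" where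
  "complete_graph_edges m = {{i,j} | i j. i < m \<and> j < m \<and> i \<noteq> j}"

definition edge_signing :: "nat set set \<Rightarrow> (nat set \<Rightarrow> real) \<Rightarrow> bool" where
  "edge_signing E \<sigma> \<longleftrightarrow> (\<forall>e\<in>E. \<sigma> e = 1 \<or> \<sigma> e = -1)"

definition signed_adjacency :: "nat \<Rightarrow> nat set set \<Rightarrow> (nat set \<Rightarrow> real) \<Rightarrow> real mat" where
  "signed_adjacency m E \<sigma> = mat m m (\<lambda>(i,j). if {i,j} \<in> E then \<sigma> {i,j} else 0)"

definition good_signing :: "nat \<Rightarrow> nat \<Rightarrow> nat set set \<Rightarrow> (nat set \<Rightarrow> real) \<Rightarrow> bool" where
  "good_signing m d E \<sigma> \<longleftrightarrow> edge_signing E \<sigma> \<and>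
     (\<forall>z::complex. eigenvalue (map_mat complex_of_real (signed_adjacency m E \<sigma>)) z
        \<longrightarrow> cmod z \<le> 2 * sqrt (real d - 1))"

end

(* Write m = n + k with 1 <= k <= 3.  For k <= n, K_m is signed by the symmetric block matrix
   A = [[C, B], [B^T, -C_k]] built from the conference matrix C.  Gershgorin's theorem applied
   to A^2 bounds |lambda|^2 for every eigenvalue lambda by the largest absolute row sum of A^2,
   so it suffices that these row sums are at most 4(m - 2).  Since C^2 = (n - 1) I, the entries of
   A^2 are explicit: the diagonal is about n + k - 1, and all but O(k) off-diagonal entries of a
   row are sums x of k <= 3 signs, for which |x| <= (x^2 + k) / (k + 1); the sum of the x^2 over
   a row is again computed exactly from C^2 = (n - 1) I.  The remaining case m = 5 with n = 2 is covered
   by an explicit signing of K_5.  Only symmetry and C^2 = (n - 1) I are used, not the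
   normalisation of the first row. *)

theory Submission
  imports Defs
begin

lemma eigenvalue_norm_le_row_sum:
  fixes A :: "complex mat"
  assumes A: "A \<in> carrier_mat m m" and ev: "eigenvalue A z"
    and rows: "\<And>i. i < m \<Longrightarrow> (\<Sum>j<m. cmod (A $$ (i,j))) \<le> R"
  shows "cmod z \<le> R"
proof -
  obtain v where v: "v \<in> carrier_vec m" "v \<noteq> 0\<^sub>v m" "A *\<^sub>v v = z \<cdot>\<^sub>v v"
    using ev A unfolding eigenvalue_def eigenvector_def by auto
  obtain j0 where j0: "j0 < m" "v $ j0 \<noteq> 0"
    using v(1,2) by (metis carrier_vecD eq_vecI index_zero_vec)
  then have nonempty: "(\<lambda>j. cmod (v $ j)) ` {..<m} \<noteq> {}" by auto
  obtain i where i: "i < m" "cmod (v $ i) = Max ((\<lambda>j. cmod (v $ j)) ` {..<m})"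
    using Max_in[OF _ nonempty] by auto
  have v_le: "cmod (v $ j) \<le> cmod (v $ i)" if "j < m" for j
    using that by (simp add: i(2))
  have v_pos: "cmod (v $ i) > 0"
  proof -
    have "cmod (v $ j0) > 0" using j0(2) by simp
    then show ?thesis using v_le[OF j0(1)] by linarith
  qed
  have eq: "z * v $ i = (\<Sum>j<m. A $$ (i,j) * v $ j)"
  proof -
    have "(A *\<^sub>v v) $ i = (z \<cdot>\<^sub>v v) $ i" using v(3) by simp
    then show ?thesis
      using A v(1) i(1) by (simp add: scalar_prod_def atLeast0LessThan mult.commute)
  qed
  have "cmod z * cmod (v $ i) = cmod (\<Sum>j<m. A $$ (i,j) * v $ j)"
    by (simp only: eq[symmetric] norm_mult)
  also have "\<dots> \<le> (\<Sum>j<m. cmod (A $$ (i,j) * v $ j))"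
    by (rule norm_sum)
  also have "\<dots> = (\<Sum>j<m. cmod (A $$ (i,j)) * cmod (v $ j))"
    by (simp add: norm_mult)
  also have "\<dots> \<le> (\<Sum>j<m. cmod (A $$ (i,j))) * cmod (v $ i)"
    unfolding sum_distrib_right by (intro sum_mono mult_left_mono v_le) auto
  also have "\<dots> \<le> R * cmod (v $ i)"
    using rows[OF i(1)] v_pos by (simp add: mult_right_mono)
  finally show ?thesis using v_pos by simp
qed

lemma eigenvalue_mult_self:
  assumes "A \<in> carrier_mat m m" and "eigenvalue A z"
  shows "eigenvalue (A * A) (z * z)"
proof -
  obtain v where v: "eigenvector A v z" using assms(2) unfolding eigenvalue_def by auto
  have "A * A = A ^\<^sub>m 2" by (simp add: numeral_2_eq_2)
  then have "(A * A) *\<^sub>v v = (z * z) \<cdot>\<^sub>v v"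
    using eigenvector_pow[OF assms(1) v, of 2] by (simp add: power2_eq_square)
  then show ?thesis
    using v assms(1) unfolding eigenvalue_def eigenvector_def by auto
qed

lemma eigenvalue_sq_le_square_row_sum:
  fixes A :: "nat \<Rightarrow> nat \<Rightarrow> real"
  assumes ev: "eigenvalue (map_mat complex_of_real (mat m m (\<lambda>(i,j). A i j))) z"
    and rows: "\<And>i. i < m \<Longrightarrow> (\<Sum>j<m. \<bar>\<Sum>l<m. A i l * A l j\<bar>) \<le> R"
  shows "cmod z ^ 2 \<le> R"
proof -
  let ?A = "mat m m (\<lambda>(i,j). A i j)"
  let ?M = "map_mat complex_of_real ?A"
  have A: "?A \<in> carrier_mat m m" by simp
  have "eigenvalue (map_mat complex_of_real (?A * ?A)) (z * z)"
    unfolding of_real_hom.mat_hom_mult[OF A A] using eigenvalue_mult_self[of ?M m z] ev by simp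
  moreover have "cmod (map_mat complex_of_real (?A * ?A) $$ (i,j)) = \<bar>\<Sum>l<m. A i l * A l j\<bar>"
    if "i < m" "j < m" for i j
    using that by (simp add: scalar_prod_def atLeast0LessThan del: of_real_sum of_real_mult)
  ultimately have "cmod (z * z) \<le> R"
    using rows by (intro eigenvalue_norm_le_row_sum[of _ m]) auto
  then show ?thesis by (simp add: norm_mult power2_eq_square)
qed

lemma complete_graph_edges_iff:
  assumes "i < m" "j < m"
  shows "{i,j} \<in> complete_graph_edges m \<longleftrightarrow> i \<noteq> j"
  using assms unfolding complete_graph_edges_def by (auto simp: doubleton_eq_iff)

lemma min_max_apply_sym:
  assumes "A j i = A i j"
  shows "A (min i j) (max i j) = A i j"
  using assms by (cases "i \<le> j") (auto simp: min_def max_def)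

lemma signed_adjacency_complete_graph:
  fixes A :: "nat \<Rightarrow> nat \<Rightarrow> real"
  assumes sym: "\<And>i j. i < m \<Longrightarrow> j < m \<Longrightarrow> A j i = A i j"
    and diag: "\<And>i. i < m \<Longrightarrow> A i i = 0"
  shows "signed_adjacency m (complete_graph_edges m) (\<lambda>e. A (Min e) (Max e)) = mat m m (\<lambda>(i,j). A i j)"
proof (rule eq_matI)
  fix i j assume "i < dim_row (mat m m (\<lambda>(i,j). A i j))" "j < dim_col (mat m m (\<lambda>(i,j). A i j))"
  then have ij: "i < m" "j < m" by auto
  then show "signed_adjacency m (complete_graph_edges m) (\<lambda>e. A (Min e) (Max e)) $$ (i,j) =
      mat m m (\<lambda>(i,j). A i j) $$ (i,j)"
    using min_max_apply_sym[of A, OF sym[OF ij(1,2)]] diag[OF ij(1)]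
    by (cases "i = j") (simp_all add: signed_adjacency_def complete_graph_edges_iff)
qed (simp_all add: signed_adjacency_def)

lemma good_signing_complete_graph_if_square_row_sums:
  fixes A :: "nat \<Rightarrow> nat \<Rightarrow> real"
  assumes sym: "\<And>i j. i < m \<Longrightarrow> j < m \<Longrightarrow> A j i = A i j"
    and diag: "\<And>i. i < m \<Longrightarrow> A i i = 0"
    and signs: "\<And>i j. i < m \<Longrightarrow> j < m \<Longrightarrow> i \<noteq> j \<Longrightarrow> A i j = 1 \<or> A i j = -1"
    and rows: "\<And>i. i < m \<Longrightarrow> (\<Sum>j<m. \<bar>\<Sum>l<m. A i l * A l j\<bar>) \<le> 4 * (real m - 2)"
    and "2 \<le> m"
  shows "\<exists>\<sigma>. good_signing m (m - 1) (complete_graph_edges m) \<sigma>"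
proof -
  define \<sigma> where "\<sigma> e = A (Min e) (Max e)" for e :: "nat set"
  have "edge_signing (complete_graph_edges m) \<sigma>"
  proof (unfold edge_signing_def, intro ballI)
    fix e assume "e \<in> complete_graph_edges m"
    then obtain i j where ij: "e = {i,j}" "i < m" "j < m" "i \<noteq> j"
      unfolding complete_graph_edges_def by auto
    then have "\<sigma> e = A i j"
      using min_max_apply_sym[of A, OF sym[OF ij(2,3)]] by (simp add: \<sigma>_def)
    then show "\<sigma> e = 1 \<or> \<sigma> e = -1"
      using signs[OF ij(2-4)] by simp
  qed
  moreover have "cmod z \<le> 2 * sqrt (real (m - 1) - 1)"
    if "eigenvalue (map_mat complex_of_real (signed_adjacency m (complete_graph_edges m) \<sigma>)) z" for z
  proof -
    have "signed_adjacency m (complete_graph_edges m) \<sigma> = mat m m (\<lambda>(i,j). A i j)"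
      unfolding \<sigma>_def[abs_def] by (rule signed_adjacency_complete_graph[OF sym diag])
    then have "eigenvalue (map_mat complex_of_real (mat m m (\<lambda>(i,j). A i j))) z"
      using that by simp
    then have "cmod z ^ 2 \<le> 4 * (real m - 2)"
      by (rule eigenvalue_sq_le_square_row_sum[OF _ rows])
    then have "cmod z \<le> sqrt (4 * (real m - 2))"
      by (rule real_le_rsqrt)
    also have "\<dots> = 2 * sqrt (real (m - 1) - 1)"
      using \<open>2 \<le> m\<close> by (simp only: real_sqrt_mult real_sqrt_four of_nat_diff) simp
    finally show ?thesis .
  qed
  ultimately show ?thesis
    unfolding good_signing_def by blast
qed

lemma sum_lessThan_add:
  fixes f :: "nat \<Rightarrow> 'a::comm_monoid_add"
  shows "(\<Sum>l<n + k. f l) = (\<Sum>l<n. f l) + (\<Sum>t<k. f (n + t))"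
  by (induct k) (auto simp: add.assoc)

lemma sum_lessThan_if_eq:
  "(\<Sum>u<k. if u = i then a else b) = (if i < k then a + (real k - 1) * b else real k * b)"
proof -
  have "(\<Sum>u<k. if u = i then a else b) = (\<Sum>u<k. b + (if u = i then a - b else 0))"
    by (intro sum.cong) auto
  then show ?thesis by (simp add: sum.distrib algebra_simps)
qed

lemma sum_lessThan_if_in_zero:
  assumes "F \<subseteq> {..<k}"
  shows "(\<Sum>t<k. if t \<in> F then 0 else 1) = real k - real (card F)"
proof -
  have "(\<Sum>t<k. if t \<in> F then 0 else (1::real)) = real (card ({..<k} - F))"
    by (simp add: sum.If_cases Diff_eq)
  moreover have "card F \<le> k"
    using card_mono[OF finite_lessThan assms] by simp
  ultimately show ?thesis
    using assms by (simp add: card_Diff_subset finite_subset of_nat_diff)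
qed

text \<open>The quadratic bound holds because \<open>(x\<^sup>2 + k) - (k + 1) \<bar>x\<bar> = (\<bar>x\<bar> - 1) (\<bar>x\<bar> - k)\<close>,
  and a sum of \<open>k \<le> 3\<close> signs never lies strictly between \<open>1\<close> and \<open>k\<close> in absolute value.\<close>
lemma abs_sum_signs_le:
  fixes s :: "nat \<Rightarrow> real"
  assumes "k \<le> 3" and "\<And>t. t < k \<Longrightarrow> s t = 1 \<or> s t = -1"
  shows "\<bar>\<Sum>t<k. s t\<bar> \<le> ((\<Sum>t<k. s t)\<^sup>2 + real k) / (real k + 1)"
proof -
  have "k = 0 \<or> k = 1 \<or> k = 2 \<or> k = 3" using assms(1) by auto
  moreover have "s 0 = 1 \<or> s 0 = -1" if "k > 0" using assms(2) that by auto
  moreover have "s 1 = 1 \<or> s 1 = -1" if "k > 1" using assms(2) that by auto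
  moreover have "s 2 = 1 \<or> s 2 = -1" if "k > 2" using assms(2) that by auto
  ultimately show ?thesis
    by (auto simp: numeral_3_eq_3 numeral_2_eq_2 lessThan_Suc field_simps power2_eq_square)
qed

locale symmetric_conference =
  fixes n :: nat and C :: "nat \<Rightarrow> nat \<Rightarrow> real"
  assumes C_diag: "\<And>i. i < n \<Longrightarrow> C i i = 0"
    and C_off_diag: "\<And>i j. i < n \<Longrightarrow> j < n \<Longrightarrow> i \<noteq> j \<Longrightarrow> C i j = 1 \<or> C i j = -1"
    and C_sym: "\<And>i j. i < n \<Longrightarrow> j < n \<Longrightarrow> C j i = C i j"
    and C_square: "\<And>i j. i < n \<Longrightarrow> j < n \<Longrightarrow>
      (\<Sum>l<n. C i l * C l j) = (if i = j then real n - 1 else 0)"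
begin

text \<open>For \<open>k \<le> n\<close> the signing of \<open>K\<^sub>n\<^sub>+\<^sub>k\<close> is given by the block matrix
  \<open>[[C, B], [B\<^sup>T, -C\<^sub>k]]\<close>, where \<open>C\<^sub>k\<close> is the leading \<open>k \<times> k\<close> block of \<open>C\<close> and column \<open>t\<close>
  of \<open>B\<close> is column \<open>t\<close> of \<open>C\<close> with its zero entry replaced by \<open>corner_sign t\<close>.
  The sign at \<open>t = 1\<close> is flipped so that columns \<open>0, 1\<close> and \<open>1, 2\<close> of \<open>B\<close> are orthogonal.\<close>

definition corner_sign :: "nat \<Rightarrow> real" where
  "corner_sign t = (if t = 1 then -1 else 1)"

definition border :: "nat \<Rightarrow> nat \<Rightarrow> real" where
  "border t i = C i t + (if i = t then corner_sign t else 0)"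

definition bordered :: "nat \<Rightarrow> nat \<Rightarrow> real" where
  "bordered a c =
    (if a < n then (if c < n then C a c else border (c - n) a)
     else (if c < n then border (a - n) c else - C (a - n) (c - n)))"

definition bordered_sq :: "nat \<Rightarrow> nat \<Rightarrow> nat \<Rightarrow> real" where
  "bordered_sq k a c = (\<Sum>l<n + k. bordered a l * bordered l c)"

lemma corner_sign_cases: "corner_sign t = 1 \<or> corner_sign t = -1"
  by (simp add: corner_sign_def)

lemma C_mult_self: "i < n \<Longrightarrow> j < n \<Longrightarrow> i \<noteq> j \<Longrightarrow> C i j * C i j = 1"
  using C_off_diag by fastforce

lemma abs_C_le_one: "i < n \<Longrightarrow> j < n \<Longrightarrow> \<bar>C i j\<bar> \<le> 1"
  using C_off_diag[of i j] C_diag[of i] by (cases "i = j") auto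

lemma border_cases: "t < n \<Longrightarrow> i < n \<Longrightarrow> border t i = 1 \<or> border t i = -1"
  using C_off_diag[of i t] C_diag[of i] corner_sign_cases[of t] by (auto simp: border_def)

lemma border_off_diag: "i \<noteq> t \<Longrightarrow> border t i = C i t"
  by (simp add: border_def)

lemma border_inner:
  assumes "u < n" "w < n"
  shows "(\<Sum>l<n. border u l * border w l) =
    (if u = w then real n else (corner_sign u + corner_sign w) * C u w)"
proof -
  have "(\<Sum>l<n. border u l * border w l) = (\<Sum>l<n. C u l * C l w
      + (if l = w then corner_sign w * C u w else 0) + (if l = u then corner_sign u * C u w else 0)
      + (if l = u \<and> u = w then corner_sign u * corner_sign w else 0))"
    using assms by (intro sum.cong refl) (auto simp: border_def algebra_simps C_sym)
  also have "\<dots> = (\<Sum>l<n. C u l * C l w) + (corner_sign w + corner_sign u) * C u w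
      + (if u = w then corner_sign u * corner_sign w else 0)"
    using assms by (cases "u = w") (simp_all add: sum.distrib algebra_simps)
  finally show ?thesis
    using assms C_square[of u w] C_diag corner_sign_cases[of u] by auto
qed

lemma bordered_sym: "a < n + k \<Longrightarrow> c < n + k \<Longrightarrow> k \<le> n \<Longrightarrow> bordered c a = bordered a c"
  by (auto simp: bordered_def C_sym)

lemma bordered_diag: "a < n + k \<Longrightarrow> k \<le> n \<Longrightarrow> bordered a a = 0"
  using C_diag by (auto simp: bordered_def)

lemma bordered_cases:
  assumes "a < n + k" "c < n + k" "k \<le> n" "a \<noteq> c"
  shows "bordered a c = 1 \<or> bordered a c = -1"
  using assms C_off_diag[of a c] C_off_diag[of "a - n" "c - n"]
    border_cases[of "c - n" a] border_cases[of "a - n" c]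
  by (auto simp: bordered_def)

lemma bordered_sq_sym:
  "a < n + k \<Longrightarrow> c < n + k \<Longrightarrow> k \<le> n \<Longrightarrow> bordered_sq k c a = bordered_sq k a c"
  unfolding bordered_sq_def by (intro sum.cong refl) (simp add: bordered_sym mult.commute)

lemma bordered_sq_upper_left:
  assumes "i < n" "j < n"
  shows "bordered_sq k i j = (if i = j then real n - 1 else 0) + (\<Sum>t<k. border t i * border t j)"
  using assms C_square[of i j] by (simp add: bordered_sq_def sum_lessThan_add bordered_def)

lemma bordered_sq_upper_right:
  assumes "i < n" "u < k" "k \<le> n"
  shows "bordered_sq k i (n + u) = (if i = u then real n - 1 else 0) + corner_sign u * C i u
    - (\<Sum>t<k. border t i * C t u)"
proof -
  have "(\<Sum>l<n. C i l * border u l)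
      = (\<Sum>l<n. C i l * C l u + (if l = u then corner_sign u * C i u else 0))"
    by (intro sum.cong refl) (simp add: border_def algebra_simps)
  also have "\<dots> = (\<Sum>l<n. C i l * C l u) + corner_sign u * C i u"
    using assms by (simp add: sum.distrib)
  finally have "(\<Sum>l<n. C i l * border u l) = (\<Sum>l<n. C i l * C l u) + corner_sign u * C i u" .
  then show ?thesis
    using assms C_square[of i u]
    by (simp add: bordered_sq_def sum_lessThan_add bordered_def sum_negf mult.commute)
qed

lemma bordered_sq_lower_right:
  assumes "u < k" "w < k" "k \<le> n"
  shows "bordered_sq k (n + u) (n + w) =
    (if u = w then real n else (corner_sign u + corner_sign w) * C u w) + (\<Sum>t<k. C u t * C t w)"
  using assms border_inner[of u w]
  by (simp add: bordered_sq_def sum_lessThan_add bordered_def)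

lemma sum_C_mult_C_self:
  assumes "u < k" "k \<le> n"
  shows "(\<Sum>t<k. C u t * C t u) = real k - 1"
proof -
  have "(\<Sum>t<k. C u t * C t u) = (\<Sum>t<k. if t \<in> {u} then 0 else 1)"
    using assms C_diag C_mult_self C_sym by (intro sum.cong refl) auto
  then show ?thesis
    using sum_lessThan_if_in_zero[of "{u}" k] assms by simp
qed

lemma abs_sum_C_mult_C_le:
  assumes "c < k" "u < k" "c \<noteq> u" "k \<le> n"
  shows "\<bar>\<Sum>t<k. C c t * C t u\<bar> \<le> real k - 2"
proof -
  have "\<bar>\<Sum>t<k. C c t * C t u\<bar> \<le> (\<Sum>t<k. \<bar>C c t * C t u\<bar>)"
    by (rule sum_abs)
  also have "\<dots> \<le> (\<Sum>t<k. if t \<in> {c, u} then 0 else 1)"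
    using assms C_diag abs_C_le_one
    by (intro sum_mono) (auto simp: abs_mult mult_le_one)
  also have "\<dots> = real k - 2"
    using sum_lessThan_if_in_zero[of "{c, u}" k] assms by simp
  finally show ?thesis .
qed

lemma sum_sq_C_combination:
  assumes "k \<le> n" "\<And>t. t < k \<Longrightarrow> w t * w t = 1"
  shows "(\<Sum>c<n. (\<Sum>t<k. C c t * w t)\<^sup>2) = real k * (real n - 1)"
proof -
  have "(\<Sum>c<n. (\<Sum>t<k. C c t * w t)\<^sup>2) = (\<Sum>c<n. \<Sum>t<k. \<Sum>t'<k. w t * w t' * (C t c * C c t'))"
    using assms(1) by (intro sum.cong refl) (simp add: power2_eq_square sum_product mult_ac C_sym)
  also have "\<dots> = (\<Sum>t<k. \<Sum>t'<k. w t * w t' * (\<Sum>c<n. C t c * C c t'))"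
    by (simp add: sum_distrib_left sum.swap[of _ "{..<n}"])
  also have "\<dots> = (\<Sum>t<k. \<Sum>t'<k. if t' = t then real n - 1 else 0)"
    using assms by (intro sum.cong refl) (simp add: C_square)
  also have "\<dots> = real k * (real n - 1)"
    by simp
  finally show ?thesis .
qed

lemma sum_sq_border_products_le:
  assumes "i < n" "k \<le> 3" "k \<le> n"
  shows "(\<Sum>c<n. (\<Sum>t<k. border t i * border t c)\<^sup>2) \<le> real k * real n + (if k = 3 then 4 else 0)"
proof -
  have sq: "border t i * border t i = 1" if "t < k" for t
    using border_cases[of t i] that assms by auto
  have "(\<Sum>c<n. (\<Sum>t<k. border t i * border t c)\<^sup>2)
      = (\<Sum>t<k. \<Sum>u<k. border t i * border u i * (\<Sum>c<n. border t c * border u c))"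
    by (simp add: power2_eq_square sum_product sum_distrib_left mult_ac sum.swap[of _ "{..<n}"])
  also have "\<dots> = (\<Sum>t<k. \<Sum>u<k. border t i * border u i *
      (if t = u then real n else (corner_sign t + corner_sign u) * C t u))"
    using assms by (intro sum.cong refl) (simp add: border_inner)
  also have "\<dots> \<le> real k * real n + (if k = 3 then 4 else 0)"
  proof -
    have "\<bar>border 0 i * border 2 i * C 0 2\<bar> \<le> 1" if "k = 3"
      using border_cases[of 0 i] border_cases[of 2 i] abs_C_le_one[of 0 2] assms that
      by (auto simp: abs_mult)
    moreover have "k = 0 \<or> k = 1 \<or> k = 2 \<or> k = 3"
      using assms by auto
    ultimately show ?thesis
      using sq C_sym[of 0 2] assms
      by (auto simp: numeral_3_eq_3 numeral_2_eq_2 lessThan_Suc corner_sign_def algebra_simps abs_le_iff)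
  qed
  finally show ?thesis .
qed

lemma upper_left_row_sum:
  assumes "i < n" "k \<le> 3" "k \<le> n"
  shows "(\<Sum>c<n. \<bar>bordered_sq k i c\<bar>)
    \<le> real n - 1 + (2 * real k * real n + (if k = 3 then 4 else 0)) / (real k + 1)"
proof -
  let ?x = "\<lambda>c. \<Sum>t<k. border t i * border t c"
  have "(\<Sum>c<n. \<bar>bordered_sq k i c\<bar>) \<le> (\<Sum>c<n. (if c = i then real n - 1 else 0) + \<bar>?x c\<bar>)"
    using assms
    by (intro sum_mono) (auto simp: bordered_sq_upper_left intro: order_trans[OF abs_triangle_ineq])
  also have "\<dots> = real n - 1 + (\<Sum>c<n. \<bar>?x c\<bar>)"
    using assms by (simp add: sum.distrib)
  also have "(\<Sum>c<n. \<bar>?x c\<bar>) \<le> (\<Sum>c<n. ((?x c)\<^sup>2 + real k) / (real k + 1))"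
  proof (intro sum_mono abs_sum_signs_le)
    fix c t assume "c \<in> {..<n}" "t < k"
    then show "border t i * border t c = 1 \<or> border t i * border t c = -1"
      using assms border_cases[of t i] border_cases[of t c] by auto
  qed (use assms in auto)
  also have "\<dots> = ((\<Sum>c<n. (?x c)\<^sup>2) + real n * real k) / (real k + 1)"
    by (simp add: sum_divide_distrib[symmetric] sum.distrib)
  also have "\<dots> \<le> (2 * real k * real n + (if k = 3 then 4 else 0)) / (real k + 1)"
    using sum_sq_border_products_le[OF assms] by (intro divide_right_mono) auto
  finally show ?thesis by simp
qed

lemma upper_right_entry_abs_le:
  assumes "i < n" "u < k" "k \<le> n"
  shows "\<bar>bordered_sq k i (n + u)\<bar> \<le> (if u = i then real n - real k else real k)"
proof (cases "i = u")
  case True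
  have "(\<Sum>t<k. border t u * C t u) = (\<Sum>t<k. C u t * C t u)"
  proof (intro sum.cong refl)
    fix t show "border t u * C t u = C u t * C t u"
      using C_diag[of u] assms by (cases "t = u") (auto simp: border_off_diag)
  qed
  then show ?thesis
    using True assms sum_C_mult_C_self[of u k] C_diag[of u] by (simp add: bordered_sq_upper_right)
next
  case False
  have "\<bar>bordered_sq k i (n + u)\<bar> = \<bar>corner_sign u * C i u - (\<Sum>t<k. border t i * C t u)\<bar>"
    using False assms by (simp add: bordered_sq_upper_right)
  also have "\<dots> \<le> \<bar>corner_sign u * C i u\<bar> + (\<Sum>t<k. \<bar>border t i * C t u\<bar>)"
    by (rule order_trans[OF abs_triangle_ineq4]) (simp add: sum_abs)
  also have "\<dots> \<le> 1 + (\<Sum>t<k. if t \<in> {u} then 0 else 1)"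
  proof (intro add_mono sum_mono)
    show "\<bar>corner_sign u * C i u\<bar> \<le> 1"
      using abs_C_le_one[of i u] assms corner_sign_cases[of u] by (auto simp: abs_mult)
    fix t assume "t \<in> {..<k}"
    then show "\<bar>border t i * C t u\<bar> \<le> (if t \<in> {u} then 0 else 1)"
      using assms C_diag[of u] abs_C_le_one[of t u] border_cases[of t i] by (auto simp: abs_mult)
  qed
  finally show ?thesis
    using False assms sum_lessThan_if_in_zero[of "{u}" k] by simp
qed

lemma upper_row_sum:
  assumes "i < n" "1 \<le> k" "k \<le> 3" "k \<le> n" "2 \<le> n"
  shows "(\<Sum>c<n + k. \<bar>bordered_sq k i c\<bar>) \<le> 4 * (real (n + k) - 2)"
proof -
  have split: "(\<Sum>c<n + k. \<bar>bordered_sq k i c\<bar>)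
      = (\<Sum>c<n. \<bar>bordered_sq k i c\<bar>) + (\<Sum>u<k. \<bar>bordered_sq k i (n + u)\<bar>)"
    by (rule sum_lessThan_add)
  have "(\<Sum>u<k. \<bar>bordered_sq k i (n + u)\<bar>) \<le> (\<Sum>u<k. if u = i then real n - real k else real k)"
    using assms upper_right_entry_abs_le by (intro sum_mono) auto
  also have "\<dots> = (if i < k then real n - real k + (real k - 1) * real k else real k * real k)"
    by (rule sum_lessThan_if_eq)
  finally have right: "(\<Sum>u<k. \<bar>bordered_sq k i (n + u)\<bar>)
      \<le> (if i < k then real n - real k + (real k - 1) * real k else real k * real k)" .
  have "real n - 1 + (2 * real k * real n + (if k = 3 then 4 else 0)) / (real k + 1)
      + (if i < k then real n - real k + (real k - 1) * real k else real k * real k)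
      \<le> 4 * (real (n + k) - 2)"
  proof -
    have "k = 1 \<or> k = 2 \<or> k = 3" "3 \<le> i \<Longrightarrow> 4 \<le> n"
      using assms by auto
    then show ?thesis
      using assms by (auto simp: field_simps)
  qed
  then show ?thesis
    using split right upper_left_row_sum[of i k] assms by linarith
qed

lemma bordered_sq_upper_right_far:
  assumes "c < n" "k \<le> c" "u < k"
  shows "bordered_sq k c (n + u) = (\<Sum>t<k. C c t * (if t = u then corner_sign u else - C t u))"
proof -
  have "(\<Sum>t<k. C c t * (if t = u then corner_sign u else - C t u))
      = (\<Sum>t<k. (if t = u then corner_sign u * C c u else 0) - C c t * C t u)"
    using assms C_diag[of u] by (intro sum.cong refl) auto
  moreover have "(\<Sum>t<k. border t c * C t u) = (\<Sum>t<k. C c t * C t u)"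
    using assms by (intro sum.cong refl) (simp add: border_off_diag)
  ultimately show ?thesis
    using assms by (simp add: bordered_sq_upper_right sum_subtractf)
qed

lemma lower_row_far_sum:
  assumes "u < k" "k \<le> 3" "k \<le> n"
  shows "(\<Sum>c\<in>{k..<n}. \<bar>bordered_sq k c (n + u)\<bar>)
    \<le> (real k * (real n - 1) + (real n - real k) * real k) / (real k + 1)"
proof -
  define w where "w t = (if t = u then corner_sign u else - C t u)" for t
  let ?y = "\<lambda>c. \<Sum>t<k. C c t * w t"
  have "(\<Sum>c\<in>{k..<n}. \<bar>bordered_sq k c (n + u)\<bar>) = (\<Sum>c\<in>{k..<n}. \<bar>?y c\<bar>)"
    using assms by (intro sum.cong refl) (simp add: bordered_sq_upper_right_far w_def)
  also have "\<dots> \<le> (\<Sum>c\<in>{k..<n}. ((?y c)\<^sup>2 + real k) / (real k + 1))"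
  proof (intro sum_mono abs_sum_signs_le)
    fix c t assume "c \<in> {k..<n}" "t < k"
    then show "C c t * w t = 1 \<or> C c t * w t = -1"
      using assms C_off_diag[of c t] C_off_diag[of t u] corner_sign_cases[of u]
      by (auto simp: w_def)
  qed (use assms in auto)
  also have "\<dots> = ((\<Sum>c\<in>{k..<n}. (?y c)\<^sup>2) + (real n - real k) * real k) / (real k + 1)"
    using assms by (simp add: sum_divide_distrib[symmetric] sum.distrib of_nat_diff)
  also have "\<dots> \<le> ((\<Sum>c<n. (?y c)\<^sup>2) + (real n - real k) * real k) / (real k + 1)"
    by (intro divide_right_mono add_right_mono sum_mono2) auto
  also have "(\<Sum>c<n. (?y c)\<^sup>2) = real k * (real n - 1)"
  proof (rule sum_sq_C_combination)
    fix t assume "t < k"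
    then show "w t * w t = 1"
      using assms C_mult_self[of t u] C_sym[of t u] corner_sign_cases[of u] by (auto simp: w_def)
  qed (use assms in simp)
  finally show ?thesis .
qed

lemma near_pair_abs_le:
  assumes "c < k" "u < k" "c \<noteq> u" "k \<le> n"
  shows "\<bar>bordered_sq k c (n + u)\<bar> + \<bar>bordered_sq k (n + u) (n + c)\<bar> \<le> 2 * (real k - 1)"
proof -
  define S where "S = (\<Sum>t<k. C c t * C t u)"
  have "(\<Sum>t<k. border t c * C t u) = (\<Sum>t<k. C c t * C t u + (if t = c then corner_sign c * C c u else 0))"
    by (intro sum.cong refl) (auto simp: border_def algebra_simps)
  then have left: "bordered_sq k c (n + u) = (corner_sign u - corner_sign c) * C c u - S"
    using assms by (simp add: bordered_sq_upper_right sum.distrib S_def algebra_simps)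
  have "(\<Sum>t<k. C u t * C t c) = S"
    unfolding S_def using assms by (intro sum.cong refl) (simp add: C_sym mult.commute)
  then have right: "bordered_sq k (n + u) (n + c) = (corner_sign u + corner_sign c) * C c u + S"
    using assms by (simp add: bordered_sq_lower_right C_sym)
  have C_cu: "\<bar>C c u\<bar> = 1"
    using assms C_off_diag[of c u] by auto
  have "\<bar>bordered_sq k c (n + u)\<bar> \<le> \<bar>corner_sign u - corner_sign c\<bar> + \<bar>S\<bar>"
    unfolding left using abs_triangle_ineq4[of "(corner_sign u - corner_sign c) * C c u" S]
    by (simp add: abs_mult C_cu)
  moreover have "\<bar>bordered_sq k (n + u) (n + c)\<bar> \<le> \<bar>corner_sign u + corner_sign c\<bar> + \<bar>S\<bar>"
    unfolding right using abs_triangle_ineq[of "(corner_sign u + corner_sign c) * C c u" S]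
    by (simp add: abs_mult C_cu)
  moreover have "\<bar>corner_sign u - corner_sign c\<bar> + \<bar>corner_sign u + corner_sign c\<bar> = 2"
    using corner_sign_cases[of u] corner_sign_cases[of c] by auto
  moreover have "\<bar>S\<bar> \<le> real k - 2"
    unfolding S_def by (rule abs_sum_C_mult_C_le[OF assms])
  ultimately show ?thesis by argo
qed

lemma lower_row_near_sum:
  assumes "u < k" "k \<le> n"
  shows "(\<Sum>c<k. \<bar>bordered_sq k c (n + u)\<bar>) + (\<Sum>w<k. \<bar>bordered_sq k (n + u) (n + w)\<bar>)
    \<le> (real n - real k) + (real n + real k - 1) + 2 * (real k - 1)\<^sup>2"
proof -
  let ?K = "{..<k} - {u}"
  have "(\<Sum>c<k. \<bar>bordered_sq k c (n + u)\<bar>) + (\<Sum>w<k. \<bar>bordered_sq k (n + u) (n + w)\<bar>)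
      = \<bar>bordered_sq k u (n + u)\<bar> + \<bar>bordered_sq k (n + u) (n + u)\<bar>
        + (\<Sum>c\<in>?K. \<bar>bordered_sq k c (n + u)\<bar> + \<bar>bordered_sq k (n + u) (n + c)\<bar>)"
    using assms by (simp add: sum.remove[of "{..<k}" u] sum.distrib)
  also have "\<bar>bordered_sq k u (n + u)\<bar> \<le> real n - real k"
    using upper_right_entry_abs_le[of u u k] assms by simp
  also have "\<bar>bordered_sq k (n + u) (n + u)\<bar> = real n + real k - 1"
    using assms sum_C_mult_C_self[of u k] by (simp add: bordered_sq_lower_right)
  also have "(\<Sum>c\<in>?K. \<bar>bordered_sq k c (n + u)\<bar> + \<bar>bordered_sq k (n + u) (n + c)\<bar>)
      \<le> (\<Sum>c\<in>?K. 2 * (real k - 1))"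
    using assms near_pair_abs_le by (intro sum_mono) auto
  also have "\<dots> = 2 * (real k - 1)\<^sup>2"
    using assms by (simp add: of_nat_diff power2_eq_square)
  finally show ?thesis by simp
qed

lemma lower_row_sum:
  assumes "u < k" "1 \<le> k" "k \<le> 3" "k \<le> n" "2 \<le> n"
  shows "(\<Sum>c<n + k. \<bar>bordered_sq k (n + u) c\<bar>) \<le> 4 * (real (n + k) - 2)"
proof -
  have split: "(\<Sum>c<n + k. \<bar>bordered_sq k (n + u) c\<bar>)
      = (\<Sum>c<n. \<bar>bordered_sq k (n + u) c\<bar>) + (\<Sum>w<k. \<bar>bordered_sq k (n + u) (n + w)\<bar>)"
    by (rule sum_lessThan_add)
  have "(\<Sum>c<n. \<bar>bordered_sq k (n + u) c\<bar>) = (\<Sum>c<n. \<bar>bordered_sq k c (n + u)\<bar>)"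
    using assms by (intro sum.cong refl) (simp add: bordered_sq_sym)
  also have "\<dots> = (\<Sum>c<k. \<bar>bordered_sq k c (n + u)\<bar>) + (\<Sum>c\<in>{k..<n}. \<bar>bordered_sq k c (n + u)\<bar>)"
  proof -
    have lessThan_split: "{..<n} = {..<k} \<union> {k..<n}" using assms by auto
    show ?thesis unfolding lessThan_split by (rule sum.union_disjoint) auto
  qed
  finally have left: "(\<Sum>c<n. \<bar>bordered_sq k (n + u) c\<bar>)
      = (\<Sum>c<k. \<bar>bordered_sq k c (n + u)\<bar>) + (\<Sum>c\<in>{k..<n}. \<bar>bordered_sq k c (n + u)\<bar>)" .
  have "(real n - real k) + (real n + real k - 1) + 2 * (real k - 1)\<^sup>2
      + (real k * (real n - 1) + (real n - real k) * real k) / (real k + 1) \<le> 4 * (real (n + k) - 2)"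
  proof -
    have "k = 1 \<or> k = 2 \<or> k = 3" using assms by auto
    then show ?thesis using assms by (auto simp: field_simps power2_eq_square)
  qed
  then show ?thesis
    using split left lower_row_near_sum[of u k] lower_row_far_sum[of u k] assms by linarith
qed

lemma bordered_good_signing:
  assumes "1 \<le> k" "k \<le> 3" "k \<le> n" "2 \<le> n"
  shows "\<exists>\<sigma>. good_signing (n + k) (n + k - 1) (complete_graph_edges (n + k)) \<sigma>"
proof (rule good_signing_complete_graph_if_square_row_sums)
  fix a assume a: "a < n + k"
  show "(\<Sum>c<n + k. \<bar>\<Sum>l<n + k. bordered a l * bordered l c\<bar>) \<le> 4 * (real (n + k) - 2)"
  proof (cases "a < n")
    case True
    then show ?thesis using upper_row_sum[OF True assms] by (simp add: bordered_sq_def)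
  next
    case False
    then obtain u where "a = n + u" "u < k"
      using a by (metis add_diff_inverse_nat nat_add_left_cancel_less)
    then show ?thesis using lower_row_sum[of u k] assms by (simp add: bordered_sq_def)
  qed
qed (use assms bordered_sym bordered_diag bordered_cases in auto)

end

text \<open>For \<open>n = 2\<close> the bordering would need \<open>k = 3 > n\<close>, so \<open>K\<^sub>5\<close> is signed directly:
  positively along the 5-cycle and negatively on the complementary 5-cycle.\<close>
definition pentagon_signing :: "nat \<Rightarrow> nat \<Rightarrow> real" where
  "pentagon_signing i j =
    (if i = j then 0 else if i + 1 = j \<or> j + 1 = i \<or> i + 4 = j \<or> j + 4 = i then 1 else -1)"

lemma pentagon_signing_square:
  assumes "i < 5" "j < 5"
  shows "(\<Sum>l<5. pentagon_signing i l * pentagon_signing l j) = (if i = j then 4 else -1)"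
proof -
  have "i = 0 \<or> i = 1 \<or> i = 2 \<or> i = 3 \<or> i = 4" "j = 0 \<or> j = 1 \<or> j = 2 \<or> j = 3 \<or> j = 4"
    using assms by auto
  moreover have "{..<5::nat} = {0, 1, 2, 3, 4}" by auto
  ultimately show ?thesis by (elim disjE) (simp_all add: pentagon_signing_def)
qed

lemma good_signing_K5: "\<exists>\<sigma>. good_signing 5 (5 - 1) (complete_graph_edges 5) \<sigma>"
proof (rule good_signing_complete_graph_if_square_row_sums)
  fix i :: nat assume i: "i < 5"
  have "(\<Sum>j<5. \<bar>\<Sum>l<5. pentagon_signing i l * pentagon_signing l j\<bar>) = (\<Sum>j<5. if j = i then 4 else 1)"
    using i by (intro sum.cong refl) (auto simp: pentagon_signing_square)
  also have "\<dots> = 8"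
    using i by (simp add: sum_lessThan_if_eq)
  finally show "(\<Sum>j<5. \<bar>\<Sum>l<5. pentagon_signing i l * pentagon_signing l j\<bar>) \<le> 4 * (real 5 - 2)"
    by simp
qed (auto simp: pentagon_signing_def)

lemma symmetric_conference_of_mat:
  assumes "conference_matrix n C" "transpose_mat C = C"
  shows "symmetric_conference n (\<lambda>i j. C $$ (i,j))"
proof
  have C: "C \<in> carrier_mat n n" and CC: "C * C = of_nat (n - 1) \<cdot>\<^sub>m 1\<^sub>m n"
    using assms unfolding conference_matrix_def by auto
  fix i j assume ij: "i < n" "j < n"
  show "C $$ (j,i) = C $$ (i,j)"
    using ij C arg_cong[OF assms(2), of "\<lambda>M. M $$ (i,j)"] by simp
  have "(\<Sum>l<n. C $$ (i,l) * C $$ (l,j)) = (C * C) $$ (i,j)"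
    using C ij by (simp add: scalar_prod_def atLeast0LessThan)
  also have "\<dots> = (if i = j then real n - 1 else 0)"
    using ij by (simp add: CC of_nat_diff)
  finally show "(\<Sum>l<n. C $$ (i,l) * C $$ (l,j)) = (if i = j then real n - 1 else 0)" .
qed (use assms in \<open>auto simp: conference_matrix_def\<close>)

theorem mainTheorem1:
  fixes n :: nat and C :: "real mat"
  assumes "n \<ge> 2"
    and "normalized_symmetric_conference_matrix n C"
  shows "\<forall>m \<in> {n+1, n+2, n+3}. \<exists>\<sigma>. good_signing m (m - 1) (complete_graph_edges m) \<sigma>"
proof -
  interpret symmetric_conference n "\<lambda>i j. C $$ (i,j)"
    using assms(2) symmetric_conference_of_mat
    unfolding normalized_symmetric_conference_matrix_def by blast
  have "\<exists>\<sigma>. good_signing (n + k) (n + k - 1) (complete_graph_edges (n + k)) \<sigma>"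
    if "1 \<le> k" "k \<le> 3" for k
  proof (cases "k \<le> n")
    case True
    then show ?thesis using bordered_good_signing that assms(1) by blast
  next
    case False
    then have "n + k = 5" using that assms(1) by auto
    then show ?thesis using good_signing_K5 by simp
  qed
  from this[of 1] this[of 2] this[of 3] show ?thesis by auto
qed

end
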